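(* Let $X$, $Y_k$ ($k\in\mathbb N$) and norms $\|\cdot\|_{X\oplus Y_k}$ be as in the generalized $\ell^2$-sum setting. (A) For every $x+\sum_k y_k\in\Sigma(X\oplus Y_k)$, $$\max\Big\{\|x\|_X,\tfrac12\Big(\sum_k\|y_k\|_{Y_k}^2\Big)^{1/2}\Big\}\le\Big\|x+\sum_k y_k\Big\|_\Sigma\le\|x\|_X+\Big(\sum_k\|y_k\|_{Y_k}^2\Big)^{1/2}.$$ In particular, $(\Sigma(X\oplus Y_k),\|\cdot\|_\Sigma)$ is isomorphic to the standard $\ell^2$-sum of $X,Y_1,Y_2,\dots$. (B) The dual norm of $\|\cdot\|_\Sigma$ satisfies, for $x^*\in X^*$, $y_k^*\in Y_k^*$ with $\sum_k\|y_k^*\|_{Y_k}^2<\infty$, $$\max\Big\{\|x^*\|_X,\Big(\sum_k\|y_k^*\|_{Y_k}^2\Big)^{1/2}\Big\}\le\Big\|x^*+\sum_k y_k^*\Big\|_\Sigma\le\|x^*\|_X+2\Big(\sum_k\|y_k^*\|_{Y_k}^2\Big)^{1/2}.$$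
   Context: Setting: $(X,\|\cdot\|_X)$ and $(Y_k,\|\cdot\|_{Y_k})$, $k\in\mathbb N$, are Banach spaces; for each $k$, $\|\cdot\|_{X\oplus Y_k}$ is a norm on $X\oplus Y_k$ coinciding with $\|\cdot\|_X$ on $X$ and with $\|\cdot\|_{Y_k}$ on $Y_k$, and monotone: $\|x+y_k\|_{X\oplus Y_k}\ge\|x\|_X$. Duals of direct sums are identified with direct sums of duals via $(x^*+y^* )(x+y)=x^*(x)+y^*(y)$. $\Lambda(X\oplus Y_k)$ is the set of functionals $x^*+\sum_k\alpha_ky_k^*$ with $x^*\in X^*$, $y_k^*\in Y_k^*$, $\|x^*+y_k^*\|_{X\oplus Y_k}\le1$ for all $k$, $0\le\alpha_k\le1$, $\sum\alpha_k^2\le1$. $\Sigma(X\oplus Y_k)=\{x+y_1+y_2+\dots:x\in X,y_k\in Y_k,\sum\|y_k\|_{Y_k}^2<\infty\}$ with $\|z\|_\Sigma=\sup\{|z^*(z)|:z^*\in\Lambda(X\oplus Y_k)\}$; the dual norm is also denoted $\|\cdot\|_\Sigma$. *)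

theory Defs
  imports "HOL-Analysis.Analysis"
begin

text \<open>The family of Banach
spaces Y_k (k in nat) is represented by closed linear subspaces Y k of a common
Banach type 'y::banach, with the inherited norm. The norm on the direct sum X + Y_k
is a function N k x y, defined for x in X and y in Y k.
Functionals on Y_k are real functions on 'y, linear and bounded on Y k
(only their values on Y k matter).\<close>

definition gen_l2_setting :: "(nat \<Rightarrow> 'y::banach set) \<Rightarrow> (nat \<Rightarrow> 'x::banach \<Rightarrow> 'y \<Rightarrow> real) \<Rightarrow> bool" where
  "gen_l2_setting Y N \<longleftrightarrow>
     (\<forall>k. subspace (Y k) \<and> closed (Y k)) \<and>
     (\<forall>k x y. y \<in> Y k \<longrightarrow> 0 \<le> N k x y) \<and>
     (\<forall>k x y. y \<in> Y k \<longrightarrow> N k x y = 0 \<longrightarrow> x = 0 \<and> y = 0) \<and>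
     (\<forall>k c x y. y \<in> Y k \<longrightarrow> N k (c *\<^sub>R x) (c *\<^sub>R y) = \<bar>c\<bar> * N k x y) \<and>
     (\<forall>k x y x' y'. y \<in> Y k \<longrightarrow> y' \<in> Y k \<longrightarrow> N k (x + x') (y + y') \<le> N k x y + N k x' y') \<and>
     (\<forall>k x. N k x 0 = norm x) \<and>
     (\<forall>k y. y \<in> Y k \<longrightarrow> N k 0 y = norm y) \<and>
     (\<forall>k x y. y \<in> Y k \<longrightarrow> norm x \<le> N k x y)"

definition dual_on :: "'a::real_normed_vector set \<Rightarrow> ('a \<Rightarrow> real) set" where
  "dual_on S = {f. (\<forall>a\<in>S. \<forall>b\<in>S. f (a + b) = f a + f b) \<and>
                    (\<forall>c. \<forall>a\<in>S. f (c *\<^sub>R a) = c * f a) \<and>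
                    (\<exists>B. \<forall>a\<in>S. \<bar>f a\<bar> \<le> B * norm a)}"

definition dnorm_on :: "'a::real_normed_vector set \<Rightarrow> ('a \<Rightarrow> real) \<Rightarrow> real" where
  "dnorm_on S f = Sup {\<bar>f a\<bar> | a. a \<in> S \<and> norm a \<le> 1}"

definition sum_dnorm :: "(nat \<Rightarrow> 'y::banach set) \<Rightarrow> (nat \<Rightarrow> 'x::banach \<Rightarrow> 'y \<Rightarrow> real) \<Rightarrow> nat
    \<Rightarrow> ('x \<Rightarrow>\<^sub>L real) \<Rightarrow> ('y \<Rightarrow> real) \<Rightarrow> real" where
  "sum_dnorm Y N k xs ys = Sup {\<bar>blinfun_apply xs x + ys y\<bar> | x y. y \<in> Y k \<and> N k x y \<le> 1}"

definition Lambda_set :: "(nat \<Rightarrow> 'y::banach set) \<Rightarrow> (nat \<Rightarrow> 'x::banach \<Rightarrow> 'y \<Rightarrow> real)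
    \<Rightarrow> (('x \<Rightarrow>\<^sub>L real) \<times> (nat \<Rightarrow> 'y \<Rightarrow> real) \<times> (nat \<Rightarrow> real)) set" where
  "Lambda_set Y N = {(xs, ys, \<alpha>).
      (\<forall>k. ys k \<in> dual_on (Y k)) \<and>
      (\<forall>k. sum_dnorm Y N k xs (ys k) \<le> 1) \<and>
      (\<forall>k. 0 \<le> \<alpha> k \<and> \<alpha> k \<le> 1) \<and>
      summable (\<lambda>k. (\<alpha> k)\<^sup>2) \<and> (\<Sum>k. (\<alpha> k)\<^sup>2) \<le> 1}"

definition Sigma_sp :: "(nat \<Rightarrow> 'y::banach set) \<Rightarrow> ('x::banach \<times> (nat \<Rightarrow> 'y)) set" where
  "Sigma_sp Y = {(x, y). (\<forall>k. y k \<in> Y k) \<and> summable (\<lambda>k. (norm (y k))\<^sup>2)}"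

definition sigma_norm :: "(nat \<Rightarrow> 'y::banach set) \<Rightarrow> (nat \<Rightarrow> 'x::banach \<Rightarrow> 'y \<Rightarrow> real)
    \<Rightarrow> 'x \<Rightarrow> (nat \<Rightarrow> 'y) \<Rightarrow> real" where
  "sigma_norm Y N x y = Sup {\<bar>blinfun_apply xs x + (\<Sum>k. \<alpha> k * ys k (y k))\<bar> | xs ys \<alpha>. (xs, ys, \<alpha>) \<in> Lambda_set Y N}"

definition sigma_dual_norm :: "(nat \<Rightarrow> 'y::banach set) \<Rightarrow> (nat \<Rightarrow> 'x::banach \<Rightarrow> 'y \<Rightarrow> real)
    \<Rightarrow> ('x \<Rightarrow>\<^sub>L real) \<Rightarrow> (nat \<Rightarrow> 'y \<Rightarrow> real) \<Rightarrow> real" where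
  "sigma_dual_norm Y N xs ys = Sup {\<bar>blinfun_apply xs x + (\<Sum>k. ys k (y k))\<bar> | x y.
       (x, y) \<in> Sigma_sp Y \<and> sigma_norm Y N x y \<le> 1}"

end

theory Submission
  imports Defs
begin

text \<open>
  The lower bounds come from testing against members of \<open>\<Lambda>\<close>: a Hahn--Banach functional
  norming \<open>x\<close> (all \<open>\<alpha>\<^sub>k = 0\<close>) gives \<open>\<parallel>x\<parallel>\<close>, and halves of functionals norming the \<open>y\<^sub>k\<close>,
  weighted by \<open>\<alpha>\<^sub>k = \<parallel>y\<^sub>k\<parallel> / (\<Sum>\<parallel>y\<^sub>k\<parallel>\<^sup>2)\<^sup>1\<^sup>/\<^sup>2\<close>, give half the \<open>\<ell>\<^sup>2\<close>-norm of \<open>(y\<^sub>k)\<close>; the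
  halving is forced because monotonicity only yields \<open>\<parallel>y\<parallel> \<le> 2\<parallel>x + y\<parallel>\<close> on \<open>X \<oplus> Y\<^sub>k\<close>.
  Every member of \<open>\<Lambda>\<close> has \<open>\<parallel>x\<^sup>*\<parallel> \<le> 1\<close> and \<open>\<parallel>y\<^sub>k\<^sup>*\<parallel> \<le> 1\<close>, so Cauchy--Schwarz gives the
  upper bound. The dual estimates follow from these by duality; for the lower one,
  \<open>x\<^sup>* + \<Sum>y\<^sub>k\<^sup>*\<close> is evaluated on finitely supported vectors almost norming the \<open>y\<^sub>k\<^sup>*\<close>.
\<close>

section \<open>Cauchy--Schwarz for series\<close>

lemma Cauchy_Schwarz_suminf:
  fixes a b u :: "nat \<Rightarrow> real"
  assumes a: "\<And>k. 0 \<le> a k" "summable (\<lambda>k. (a k)\<^sup>2)"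
    and b: "\<And>k. 0 \<le> b k" "summable (\<lambda>k. (b k)\<^sup>2)"
    and u: "\<And>k. \<bar>u k\<bar> \<le> a k * b k"
  shows "summable u" and "\<bar>\<Sum>k. u k\<bar> \<le> sqrt (\<Sum>k. (a k)\<^sup>2) * sqrt (\<Sum>k. (b k)\<^sup>2)"
proof -
  have partial: "(\<Sum>k<n. a k * b k) \<le> sqrt (\<Sum>k. (a k)\<^sup>2) * sqrt (\<Sum>k. (b k)\<^sup>2)" for n
  proof -
    have "(\<Sum>k<n. a k * b k) \<le> L2_set a {..<n} * L2_set b {..<n}"
      using L2_set_mult_ineq[of a b "{..<n}"] a(1) b(1) by simp
    also have "\<dots> \<le> sqrt (\<Sum>k. (a k)\<^sup>2) * sqrt (\<Sum>k. (b k)\<^sup>2)"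
      unfolding L2_set_def
      by (intro mult_mono real_sqrt_le_mono sum_le_suminf) (auto simp: a b sum_nonneg suminf_nonneg)
    finally show ?thesis .
  qed
  have ab: "summable (\<lambda>k. a k * b k)"
    using partial a(1) b(1) by (intro summableI_nonneg_bounded) auto
  have abs_u: "summable (\<lambda>k. \<bar>u k\<bar>)"
    using summable_rabs_comparison_test[OF _ ab] u by blast
  show "summable u" using summable_rabs_cancel[OF abs_u] .
  have "\<bar>\<Sum>k. u k\<bar> \<le> (\<Sum>k. \<bar>u k\<bar>)" by (rule summable_rabs[OF abs_u])
  also have "\<dots> \<le> (\<Sum>k. a k * b k)" by (rule suminf_le[OF u abs_u ab])
  also have "\<dots> \<le> sqrt (\<Sum>k. (a k)\<^sup>2) * sqrt (\<Sum>k. (b k)\<^sup>2)" by (rule suminf_le_const[OF ab partial])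
  finally show "\<bar>\<Sum>k. u k\<bar> \<le> sqrt (\<Sum>k. (a k)\<^sup>2) * sqrt (\<Sum>k. (b k)\<^sup>2)" .
qed

section \<open>Norming functionals\<close>

text \<open>Partial norming functionals are handled through their graphs, so that Zorn's lemma
  applies to them ordered by inclusion.\<close>

definition norming_graph :: "'a::real_normed_vector \<Rightarrow> ('a \<times> real) set \<Rightarrow> bool" where
  "norming_graph a G \<longleftrightarrow>
     (\<forall>x u v. (x, u) \<in> G \<longrightarrow> (x, v) \<in> G \<longrightarrow> u = v) \<and> (a, norm a) \<in> G \<and>
     (\<forall>x u y v. (x, u) \<in> G \<longrightarrow> (y, v) \<in> G \<longrightarrow> (x + y, u + v) \<in> G) \<and>
     (\<forall>x u c. (x, u) \<in> G \<longrightarrow> (c *\<^sub>R x, c * u) \<in> G) \<and>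
     (\<forall>x u. (x, u) \<in> G \<longrightarrow> u \<le> norm x)"

lemma norming_graphD:
  assumes "norming_graph a G"
  shows "\<And>x u v. (x, u) \<in> G \<Longrightarrow> (x, v) \<in> G \<Longrightarrow> u = v"
    and "(a, norm a) \<in> G"
    and "\<And>x u y v. (x, u) \<in> G \<Longrightarrow> (y, v) \<in> G \<Longrightarrow> (x + y, u + v) \<in> G"
    and "\<And>x u c. (x, u) \<in> G \<Longrightarrow> (c *\<^sub>R x, c * u) \<in> G"
    and "\<And>x u. (x, u) \<in> G \<Longrightarrow> u \<le> norm x"
  using assms unfolding norming_graph_def by blast+

lemma norming_graph_span: "norming_graph a {(t *\<^sub>R a, t * norm a) | t. True}"
proof -
  have unique: "t * norm a = t' * norm a" if "t *\<^sub>R a = t' *\<^sub>R a" for t t'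
    using that by (cases "a = 0") (auto simp: scaleR_cancel_right)
  have add: "\<exists>t''. t *\<^sub>R a + t' *\<^sub>R a = t'' *\<^sub>R a \<and> t * norm a + t' * norm a = t'' * norm a"
    for t t' by (metis scaleR_add_left distrib_right)
  have scale: "\<exists>t'. c *\<^sub>R t *\<^sub>R a = t' *\<^sub>R a \<and> c * (t * norm a) = t' * norm a" for c t
    by (intro exI[of _ "c * t"]) simp
  show ?thesis
    unfolding norming_graph_def
    by (auto simp: unique add scale abs_ge_self mult_right_mono intro: exI[of _ 1])
qed

lemma norming_graph_Union_chain:
  assumes C: "C \<in> chains {G. norming_graph a G}" and "C \<noteq> {}"
  shows "norming_graph a (\<Union>C)"
proof -
  have good: "norming_graph a G" if "G \<in> C" for G using C that chainsD2 by blast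
  have common: "\<exists>G\<in>C. p \<in> G \<and> q \<in> G" if "p \<in> \<Union>C" "q \<in> \<Union>C" for p q
    using that chainsD[OF C] by blast
  obtain G0 where "G0 \<in> C" using \<open>C \<noteq> {}\<close> by blast
  show ?thesis
    unfolding norming_graph_def
  proof (intro conjI allI impI)
    show "(a, norm a) \<in> \<Union>C" using good[OF \<open>G0 \<in> C\<close>] norming_graphD(2) \<open>G0 \<in> C\<close> by blast
    show "u = v" if "(x, u) \<in> \<Union>C" "(x, v) \<in> \<Union>C" for x u v
      using common[OF that] good norming_graphD(1) by metis
    show "(x + y, u + v) \<in> \<Union>C" if "(x, u) \<in> \<Union>C" "(y, v) \<in> \<Union>C" for x u y v
      using common[OF that] good norming_graphD(3) by blast
    show "(c *\<^sub>R x, c * u) \<in> \<Union>C" if "(x, u) \<in> \<Union>C" for x u c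
      using that good norming_graphD(4) by blast
    show "u \<le> norm x" if "(x, u) \<in> \<Union>C" for x u
      using that good norming_graphD(5) by blast
  qed
qed

lemma norming_graph_extension_constant:
  assumes M: "norming_graph a M"
  obtains c where "\<And>s u. (s, u) \<in> M \<Longrightarrow> u - norm (s - z) \<le> c"
    and "\<And>s u. (s, u) \<in> M \<Longrightarrow> c \<le> norm (s + z) - u"
proof -
  define L where "L = {u - norm (s - z) | s u. (s, u) \<in> M}"
  have sep: "u - norm (s - z) \<le> norm (s' + z) - u'" if "(s, u) \<in> M" "(s', u') \<in> M" for s u s' u'
  proof -
    have "u + u' \<le> norm ((s - z) + (s' + z))"
      using norming_graphD(3,5)[OF M] that by simp
    also have "\<dots> \<le> norm (s - z) + norm (s' + z)" by (rule norm_triangle_ineq)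
    finally show ?thesis by simp
  qed
  have "L \<noteq> {}" using norming_graphD(2)[OF M] unfolding L_def by blast
  moreover have "bdd_above L"
    using sep[OF _ norming_graphD(2)[OF M]] unfolding L_def by (intro bdd_aboveI) blast
  ultimately show ?thesis
    using sep unfolding L_def
    by (intro that[of "Sup L"]) (auto intro!: cSup_upper cSup_least simp: L_def)
qed

lemma norming_graph_extension_le_norm:
  assumes M: "norming_graph a M" and sw: "(s, w) \<in> M"
    and lower: "\<And>s u. (s, u) \<in> M \<Longrightarrow> u - norm (s - z) \<le> c"
    and upper: "\<And>s u. (s, u) \<in> M \<Longrightarrow> c \<le> norm (s + z) - u"
  shows "w + t * c \<le> norm (s + t *\<^sub>R z)"
proof -
  consider "t = 0" | "t > 0" | "t < 0" by linarith
  then show ?thesis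
  proof cases
    case 1
    then show ?thesis using norming_graphD(5)[OF M sw] by simp
  next
    case 2
    have "c \<le> norm ((1/t) *\<^sub>R s + z) - (1/t) * w"
      using upper[OF norming_graphD(4)[OF M sw]] .
    then have "t * c \<le> t * (norm ((1/t) *\<^sub>R s + z) - (1/t) * w)"
      using 2 by (simp add: mult_left_mono)
    also have "\<dots> = norm (t *\<^sub>R ((1/t) *\<^sub>R s + z)) - w"
      using 2 by (simp add: right_diff_distrib)
    also have "t *\<^sub>R ((1/t) *\<^sub>R s + z) = s + t *\<^sub>R z"
      using 2 by (simp add: scaleR_add_right)
    finally show ?thesis by simp
  next
    case 3
    have "(1/(-t)) * w - norm ((1/(-t)) *\<^sub>R s - z) \<le> c"
      using lower[OF norming_graphD(4)[OF M sw]] .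
    then have "(-t) * ((1/(-t)) * w - norm ((1/(-t)) *\<^sub>R s - z)) \<le> (-t) * c"
      using 3 by (simp add: mult_left_mono)
    also have "(-t) * ((1/(-t)) * w - norm ((1/(-t)) *\<^sub>R s - z))
        = w - norm ((-t) *\<^sub>R ((1/(-t)) *\<^sub>R s - z))"
      using 3 by (simp add: right_diff_distrib)
    also have "(-t) *\<^sub>R ((1/(-t)) *\<^sub>R s - z) = s + t *\<^sub>R z"
      using 3 by (simp add: scaleR_diff_right)
    finally show ?thesis by simp
  qed
qed

lemma norming_graph_decomposition_unique:
  assumes M: "norming_graph a M" and z: "z \<notin> fst ` M"
    and "(s, u) \<in> M" "(s', u') \<in> M" "s + t *\<^sub>R z = s' + t' *\<^sub>R z"
  shows "t = t' \<and> s = s'"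
proof (rule ccontr)
  assume "\<not> (t = t' \<and> s = s')"
  then have "t \<noteq> t'" using assms(5) by auto
  have "((1/(t - t')) *\<^sub>R (s' + (-1) *\<^sub>R s), (1/(t - t')) * (u' + (-1) * u)) \<in> M"
    using norming_graphD(3,4)[OF M] assms(3,4) by blast
  moreover have "s' - s = (t - t') *\<^sub>R z" using assms(5) by (simp add: algebra_simps)
  then have "(1/(t - t')) *\<^sub>R (s' + (-1) *\<^sub>R s) = z" using \<open>t \<noteq> t'\<close> by simp
  ultimately show False using z by force
qed

lemma norming_graph_extend:
  assumes M: "norming_graph a M" and z: "z \<notin> fst ` M"
  shows "\<exists>G. norming_graph a G \<and> M \<subset> G"
proof -
  obtain c where lower: "\<And>s u. (s, u) \<in> M \<Longrightarrow> u - norm (s - z) \<le> c"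
    and upper: "\<And>s u. (s, u) \<in> M \<Longrightarrow> c \<le> norm (s + z) - u"
    using norming_graph_extension_constant[OF M] by metis
  define G where "G = {(s + t *\<^sub>R z, u + t * c) | s u t. (s, u) \<in> M}"
  have zero: "(0, 0) \<in> M" using norming_graphD(4)[OF M norming_graphD(2)[OF M], of 0] by simp
  note unique = norming_graph_decomposition_unique[OF M z]
  have "M \<subseteq> G" unfolding G_def by (force intro: exI[of _ 0])
  moreover have "(z, c) \<in> G - M"
    using zero z unfolding G_def by (force intro: exI[of _ 1])
  moreover have "norming_graph a G"
    unfolding norming_graph_def
  proof (intro conjI allI impI)
    show "(a, norm a) \<in> G" using norming_graphD(2)[OF M] \<open>M \<subseteq> G\<close> by blast
    show "u = v" if "(x, u) \<in> G" "(x, v) \<in> G" for x u v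
      using that unique norming_graphD(1)[OF M] unfolding G_def by (smt (verit) Pair_inject mem_Collect_eq)
    show "(x + y, u + v) \<in> G" if xu: "(x, u) \<in> G" and yv: "(y, v) \<in> G" for x u y v
    proof -
      obtain s1 u1 t1 s2 u2 t2 where "(s1, u1) \<in> M" "(s2, u2) \<in> M"
        "x = s1 + t1 *\<^sub>R z" "u = u1 + t1 * c" "y = s2 + t2 *\<^sub>R z" "v = u2 + t2 * c"
        using xu yv unfolding G_def by blast
      then show ?thesis
        unfolding G_def using norming_graphD(3)[OF M]
        by (intro CollectI exI[of _ "s1 + s2"] exI[of _ "u1 + u2"] exI[of _ "t1 + t2"])
          (auto simp: algebra_simps)
    qed
    show "(d *\<^sub>R x, d * u) \<in> G" if xu: "(x, u) \<in> G" for x u d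
    proof -
      obtain s1 u1 t1 where "(s1, u1) \<in> M" "x = s1 + t1 *\<^sub>R z" "u = u1 + t1 * c"
        using xu unfolding G_def by blast
      moreover from this have "d *\<^sub>R x = d *\<^sub>R s1 + (d * t1) *\<^sub>R z" "d * u = d * u1 + (d * t1) * c"
        by (simp_all add: algebra_simps)
      ultimately show ?thesis
        unfolding G_def using norming_graphD(4)[OF M] by blast
    qed
    show "u \<le> norm x" if "(x, u) \<in> G" for x u
      using that norming_graph_extension_le_norm[OF M _ lower upper] unfolding G_def by blast
  qed
  ultimately show ?thesis by blast
qed

lemma norming_functional_exists:
  fixes a :: "'a::real_normed_vector"
  obtains f where "linear f" "\<And>v. \<bar>f v\<bar> \<le> norm v" "f a = norm a"
proof -
  have "\<exists>M\<in>{G. norming_graph a G}. \<forall>G\<in>{G. norming_graph a G}. M \<subseteq> G \<longrightarrow> G = M"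
  proof (rule Zorn_Lemma2, intro ballI)
    fix C assume C: "C \<in> chains {G. norming_graph a G}"
    show "\<exists>U\<in>{G. norming_graph a G}. \<forall>G\<in>C. G \<subseteq> U"
      using norming_graph_span norming_graph_Union_chain[OF C] by (cases "C = {}") blast+
  qed
  then obtain M where M: "norming_graph a M"
    and maximal: "\<And>G. norming_graph a G \<Longrightarrow> M \<subseteq> G \<Longrightarrow> G = M"
    by blast
  have total: "x \<in> fst ` M" for x
    using norming_graph_extend[OF M] maximal by blast
  define f where "f x = (THE u. (x, u) \<in> M)" for x
  have f_eq: "f x = u" if "(x, u) \<in> M" for x u
    unfolding f_def using that norming_graphD(1)[OF M] by blast
  have graph: "(x, f x) \<in> M" for x
    using total[of x] f_eq by force
  have "linear f"
    by (rule linearI) (simp_all add: f_eq graph norming_graphD(3,4)[OF M])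
  moreover have "\<bar>f v\<bar> \<le> norm v" for v
    using norming_graphD(5)[OF M graph, of v] norming_graphD(5)[OF M graph, of "-v"]
      linear_neg[OF \<open>linear f\<close>, of v] by simp
  ultimately show ?thesis using that f_eq[OF norming_graphD(2)[OF M]] by blast
qed

section \<open>Dual norms on subspaces\<close>

lemma abs_le_mult_norm_from_unit_ball:
  assumes S: "subspace S" and homogeneous: "\<And>c a. a \<in> S \<Longrightarrow> f (c *\<^sub>R a) = c * f a"
    and unit_ball: "\<And>a. a \<in> S \<Longrightarrow> norm a \<le> 1 \<Longrightarrow> \<bar>f a\<bar> \<le> M" and y: "y \<in> S"
  shows "\<bar>f y\<bar> \<le> M * norm y"
proof (cases "y = 0")
  case True
  then show ?thesis using homogeneous[OF y, of 0] by simp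
next
  case False
  have "(1 / norm y) *\<^sub>R y \<in> S" using S y by (simp add: subspace_scale)
  then have "\<bar>f y\<bar> / norm y \<le> M"
    using unit_ball[of "(1 / norm y) *\<^sub>R y"] homogeneous[OF y] False by simp
  then show ?thesis using False by (simp add: divide_le_eq mult.commute)
qed

lemma dual_on_scaleR: "f \<in> dual_on S \<Longrightarrow> a \<in> S \<Longrightarrow> f (c *\<^sub>R a) = c * f a"
  unfolding dual_on_def by blast

lemma dual_on_zero: "f \<in> dual_on S \<Longrightarrow> subspace S \<Longrightarrow> f 0 = 0"
  using dual_on_scaleR[of f S 0 0] subspace_0 by fastforce

lemma dnorm_on_bdd_above:
  assumes "f \<in> dual_on S"
  shows "bdd_above {\<bar>f a\<bar> | a. a \<in> S \<and> norm a \<le> 1}"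
proof -
  obtain B where B: "\<And>a. a \<in> S \<Longrightarrow> \<bar>f a\<bar> \<le> B * norm a"
    using assms unfolding dual_on_def by blast
  have "\<bar>f a\<bar> \<le> \<bar>B\<bar>" if "a \<in> S" "norm a \<le> 1" for a
    using B[OF that(1)] mult_mono[OF abs_ge_self that(2)] by (smt (verit) abs_ge_zero norm_ge_zero)
  then show ?thesis by (intro bdd_aboveI[of _ "\<bar>B\<bar>"]) blast
qed

lemma abs_le_dnorm_on:
  assumes f: "f \<in> dual_on S" and S: "subspace S" and y: "y \<in> S"
  shows "\<bar>f y\<bar> \<le> dnorm_on S f * norm y"
  using abs_le_mult_norm_from_unit_ball[OF S dual_on_scaleR[OF f] _ y]
    cSup_upper[OF _ dnorm_on_bdd_above[OF f]] unfolding dnorm_on_def by blast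

lemma dnorm_on_nonneg:
  assumes f: "f \<in> dual_on S" and S: "subspace S"
  shows "0 \<le> dnorm_on S f"
  using cSup_upper[OF _ dnorm_on_bdd_above[OF f], of "\<bar>f 0\<bar>"] subspace_0[OF S]
  unfolding dnorm_on_def by force

lemma dnorm_on_approx:
  assumes f: "f \<in> dual_on S" and S: "subspace S" and t: "t < 1"
  obtains a where "a \<in> S" "norm a \<le> 1" "t * dnorm_on S f \<le> f a"
proof (cases "dnorm_on S f = 0")
  case True
  then show ?thesis using that[of 0] subspace_0[OF S] dual_on_zero[OF f S] by simp
next
  case False
  let ?A = "{\<bar>f a\<bar> | a. a \<in> S \<and> norm a \<le> 1}"
  have "t * dnorm_on S f < Sup ?A"
    using False dnorm_on_nonneg[OF f S] t unfolding dnorm_on_def by simp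
  then obtain a where a: "a \<in> S" "norm a \<le> 1" "t * dnorm_on S f < \<bar>f a\<bar>"
    using less_cSup_iff[OF _ dnorm_on_bdd_above[OF f]] subspace_0[OF S] by force
  have "-a \<in> S" "f (-a) = - f a"
    using subspace_neg[OF S a(1)] dual_on_scaleR[OF f a(1), of "-1"] by simp_all
  then show ?thesis
    using that[of a] that[of "-a"] a by (cases "0 \<le> f a") auto
qed

section \<open>The norm of \<open>\<Sigma>\<close> and its dual\<close>

lemma gen_l2_settingD:
  assumes "gen_l2_setting Y N"
  shows "subspace (Y k)" "N k x 0 = norm x" "y \<in> Y k \<Longrightarrow> N k 0 y = norm y"
    "y \<in> Y k \<Longrightarrow> norm x \<le> N k x y"
    "y \<in> Y k \<Longrightarrow> y' \<in> Y k \<Longrightarrow> N k (x + x') (y + y') \<le> N k x y + N k x' y'"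
  using assms unfolding gen_l2_setting_def by simp_all

lemma norm_le_2_N:
  assumes G: "gen_l2_setting Y N" and y: "y \<in> Y k"
  shows "norm y \<le> 2 * N k x y"
proof -
  have "norm y = N k (x + - x) (y + 0)" using gen_l2_settingD(3)[OF G y] by simp
  also have "\<dots> \<le> N k x y + N k (-x) 0"
    using gen_l2_settingD(1,5)[OF G] y subspace_0 by blast
  also have "\<dots> \<le> 2 * N k x y" using gen_l2_settingD(2)[OF G] gen_l2_settingD(4)[OF G y] by simp
  finally show ?thesis .
qed

lemma sum_dnorm_bdd_above:
  assumes G: "gen_l2_setting Y N" and f: "f \<in> dual_on (Y k)"
  shows "bdd_above {\<bar>blinfun_apply xs x + f y\<bar> | x y. y \<in> Y k \<and> N k x y \<le> 1}"
proof (rule bdd_aboveI[of _ "norm xs + 2 * dnorm_on (Y k) f"], clarify)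
  fix x y assume y: "y \<in> Y k" and N1: "N k x y \<le> 1"
  have "\<bar>blinfun_apply xs x\<bar> \<le> norm xs"
  proof -
    have "\<bar>blinfun_apply xs x\<bar> \<le> norm xs * norm x"
      using norm_blinfun[of xs x] by simp
    also have "\<dots> \<le> norm xs * 1"
      using gen_l2_settingD(4)[OF G y, of x] N1 by (intro mult_left_mono) auto
    finally show ?thesis by simp
  qed
  moreover have "\<bar>f y\<bar> \<le> 2 * dnorm_on (Y k) f"
  proof -
    have "\<bar>f y\<bar> \<le> dnorm_on (Y k) f * norm y"
      using abs_le_dnorm_on[OF f gen_l2_settingD(1)[OF G] y] .
    also have "\<dots> \<le> dnorm_on (Y k) f * 2"
      using norm_le_2_N[OF G y, of x] N1 dnorm_on_nonneg[OF f gen_l2_settingD(1)[OF G]]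
      by (intro mult_left_mono) auto
    finally show ?thesis by simp
  qed
  ultimately show "\<bar>blinfun_apply xs x + f y\<bar> \<le> norm xs + 2 * dnorm_on (Y k) f" by linarith
qed

lemma Lambda_setI:
  assumes G: "gen_l2_setting Y N" and dual: "\<And>k. ys k \<in> dual_on (Y k)"
    and bound: "\<And>k x y. y \<in> Y k \<Longrightarrow> N k x y \<le> 1 \<Longrightarrow> \<bar>blinfun_apply xs x + ys k y\<bar> \<le> 1"
    and "\<And>k. 0 \<le> \<alpha> k \<and> \<alpha> k \<le> 1" "summable (\<lambda>k. (\<alpha> k)\<^sup>2)" "(\<Sum>k. (\<alpha> k)\<^sup>2) \<le> 1"
  shows "(xs, ys, \<alpha>) \<in> Lambda_set Y N"
proof -
  have "sum_dnorm Y N k xs (ys k) \<le> 1" for k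
    unfolding sum_dnorm_def
  proof (rule cSup_least)
    have "N k 0 0 \<le> 1" "0 \<in> Y k"
      using gen_l2_settingD(2)[OF G, of k 0] subspace_0[OF gen_l2_settingD(1)[OF G]] by simp_all
    then show "{\<bar>blinfun_apply xs x + ys k y\<bar> | x y. y \<in> Y k \<and> N k x y \<le> 1} \<noteq> {}"
      by blast
  qed (use bound in blast)
  then show ?thesis unfolding Lambda_set_def using assms by blast
qed

lemma Lambda_set_zero: "gen_l2_setting Y N \<Longrightarrow> (0, \<lambda>k v. 0, \<lambda>k. 0) \<in> Lambda_set Y N"
  by (rule Lambda_setI) (auto simp: dual_on_def intro: exI[of _ 0])

lemma Lambda_set_abs_le_norm:
  assumes G: "gen_l2_setting Y N" and L: "(xs, ys, \<alpha>) \<in> Lambda_set Y N"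
  shows "\<bar>blinfun_apply xs x\<bar> \<le> norm x" and "y \<in> Y k \<Longrightarrow> \<bar>ys k y\<bar> \<le> norm y"
proof -
  have S: "subspace (Y k)" for k using gen_l2_settingD(1)[OF G] .
  have dual: "ys k \<in> dual_on (Y k)" for k using L unfolding Lambda_set_def by auto
  have unit: "\<bar>blinfun_apply xs x + ys k y\<bar> \<le> 1" if "y \<in> Y k" "N k x y \<le> 1" for k x y
  proof -
    have "\<bar>blinfun_apply xs x + ys k y\<bar> \<le> sum_dnorm Y N k xs (ys k)"
      unfolding sum_dnorm_def using that
      by (intro cSup_upper[OF _ sum_dnorm_bdd_above[OF G dual]]) blast
    also have "\<dots> \<le> 1" using L unfolding Lambda_set_def by simp
    finally show ?thesis .
  qed
  have "\<bar>blinfun_apply xs x\<bar> \<le> 1 * norm x"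
    using unit[of 0 0] gen_l2_settingD(2)[OF G] subspace_0[OF S] dual_on_zero[OF dual S]
    by (intro abs_le_mult_norm_from_unit_ball[OF subspace_UNIV])
      (auto simp: blinfun.scaleR_right)
  then show "\<bar>blinfun_apply xs x\<bar> \<le> norm x" by simp
  assume y: "y \<in> Y k"
  have "\<bar>ys k y\<bar> \<le> 1 * norm y"
    using unit[of _ k 0] gen_l2_settingD(3)[OF G]
    by (intro abs_le_mult_norm_from_unit_ball[OF S dual_on_scaleR[OF dual] _ y]) auto
  then show "\<bar>ys k y\<bar> \<le> norm y" by simp
qed

lemma Sigma_spD: "(x, y) \<in> Sigma_sp Y \<Longrightarrow> y k \<in> Y k"
  "(x, y) \<in> Sigma_sp Y \<Longrightarrow> summable (\<lambda>k. (norm (y k))\<^sup>2)"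
  unfolding Sigma_sp_def by auto

lemma Lambda_apply_abs_le:
  assumes G: "gen_l2_setting Y N" and L: "(xs, ys, \<alpha>) \<in> Lambda_set Y N"
    and xy: "(x, y) \<in> Sigma_sp Y"
  shows "\<bar>blinfun_apply xs x + (\<Sum>k. \<alpha> k * ys k (y k))\<bar> \<le> norm x + sqrt (\<Sum>k. (norm (y k))\<^sup>2)"
proof -
  have \<alpha>: "\<And>k. 0 \<le> \<alpha> k" "summable (\<lambda>k. (\<alpha> k)\<^sup>2)" "(\<Sum>k. (\<alpha> k)\<^sup>2) \<le> 1"
    using L unfolding Lambda_set_def by auto
  have "\<bar>\<alpha> k * ys k (y k)\<bar> \<le> \<alpha> k * norm (y k)" for k
    using Lambda_set_abs_le_norm(2)[OF G L Sigma_spD(1)[OF xy]] \<alpha>(1)[of k]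
    by (simp add: abs_mult mult_left_mono)
  then have "\<bar>\<Sum>k. \<alpha> k * ys k (y k)\<bar> \<le> sqrt (\<Sum>k. (\<alpha> k)\<^sup>2) * sqrt (\<Sum>k. (norm (y k))\<^sup>2)"
    using Cauchy_Schwarz_suminf(2) \<alpha>(1,2) Sigma_spD(2)[OF xy] by simp
  also have "\<dots> \<le> sqrt (\<Sum>k. (norm (y k))\<^sup>2)"
    using \<alpha>(3) suminf_nonneg[OF \<alpha>(2)] suminf_nonneg[OF Sigma_spD(2)[OF xy]]
    by (intro mult_left_le_one_le) auto
  finally show ?thesis
    using Lambda_set_abs_le_norm(1)[OF G L, of x] by linarith
qed

lemma sigma_norm_le:
  assumes G: "gen_l2_setting Y N" and xy: "(x, y) \<in> Sigma_sp Y"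
  shows "sigma_norm Y N x y \<le> norm x + sqrt (\<Sum>k. (norm (y k))\<^sup>2)"
  unfolding sigma_norm_def using Lambda_set_zero[OF G] Lambda_apply_abs_le[OF G _ xy]
  by (intro cSup_least) blast+

lemma Lambda_apply_le_sigma_norm:
  assumes G: "gen_l2_setting Y N" and L: "(xs, ys, \<alpha>) \<in> Lambda_set Y N"
    and xy: "(x, y) \<in> Sigma_sp Y"
  shows "\<bar>blinfun_apply xs x + (\<Sum>k. \<alpha> k * ys k (y k))\<bar> \<le> sigma_norm Y N x y"
  unfolding sigma_norm_def using L Lambda_apply_abs_le[OF G _ xy]
  by (intro cSup_upper bdd_aboveI[of _ "norm x + sqrt (\<Sum>k. (norm (y k))\<^sup>2)"]) blast+

lemma norm_le_sigma_norm:
  assumes G: "gen_l2_setting Y N" and xy: "(x, y) \<in> Sigma_sp Y"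
  shows "norm x \<le> sigma_norm Y N x y"
proof -
  obtain f where f: "linear f" "\<And>v. \<bar>f v\<bar> \<le> norm v" "f x = norm x"
    using norming_functional_exists[of x] by blast
  have "bounded_linear f"
    using f(1,2) by (intro bounded_linear_intro[of _ 1]) (auto simp: linear_add linear_scale)
  then have apply_f: "blinfun_apply (Blinfun f) = f" by (rule bounded_linear_Blinfun_apply)
  have "(Blinfun f, \<lambda>k v. 0, \<lambda>k. 0) \<in> Lambda_set Y N"
  proof (rule Lambda_setI[OF G])
    show "(\<lambda>v. 0) \<in> dual_on (Y k)" for k by (auto simp: dual_on_def intro: exI[of _ 0])
    fix k x' y' assume "y' \<in> Y k" "N k x' y' \<le> 1"
    then show "\<bar>blinfun_apply (Blinfun f) x' + 0\<bar> \<le> 1"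
      using f(2)[of x'] gen_l2_settingD(4)[OF G, of y' k x'] apply_f by simp
  qed auto
  from Lambda_apply_le_sigma_norm[OF G this xy] show ?thesis using apply_f f(3) by simp
qed

lemma half_sqrt_suminf_le_sigma_norm:
  assumes G: "gen_l2_setting Y N" and xy: "(x, y) \<in> Sigma_sp Y"
  shows "1/2 * sqrt (\<Sum>k. (norm (y k))\<^sup>2) \<le> sigma_norm Y N x y"
proof -
  define s where "s = sqrt (\<Sum>k. (norm (y k))\<^sup>2)"
  have summable: "summable (\<lambda>k. (norm (y k))\<^sup>2)" using Sigma_spD(2)[OF xy] .
  show ?thesis
  proof (cases "s = 0")
    case True
    then show ?thesis using norm_le_sigma_norm[OF G xy] norm_ge_zero[of x] s_def by linarith
  next
    case False
    then have "s > 0" unfolding s_def using suminf_nonneg[OF summable] by simp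
    have "\<forall>k. \<exists>f. linear f \<and> (\<forall>v. \<bar>f v\<bar> \<le> norm v) \<and> f (y k) = norm (y k)"
      by (meson norming_functional_exists)
    then obtain F where F: "\<And>k. linear (F k)" "\<And>k v. \<bar>F k v\<bar> \<le> norm v" "\<And>k. F k (y k) = norm (y k)"
      by metis
    define ys where "ys k v = F k v / 2" for k v
    define \<alpha> where "\<alpha> k = norm (y k) / s" for k
    have "norm (y k) \<le> s" for k
      unfolding s_def using sum_le_suminf[OF summable, of "{k}"] by (simp add: real_le_rsqrt)
    moreover have "summable (\<lambda>k. (\<alpha> k)\<^sup>2)" "(\<Sum>k. (\<alpha> k)\<^sup>2) = 1"
      unfolding \<alpha>_def power_divide using summable_divide[OF summable] suminf_divide[OF summable]
        \<open>s > 0\<close> unfolding s_def by (auto simp: suminf_nonneg[OF summable])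
    moreover have "ys k \<in> dual_on (Y k)" for k
      unfolding dual_on_def ys_def using F(1,2) linear_add[OF F(1)] linear_scale[OF F(1)]
      by (auto intro!: exI[of _ "1/2"] simp: add_divide_distrib)
    moreover have "\<bar>blinfun_apply 0 x' + ys k y'\<bar> \<le> 1" if "y' \<in> Y k" "N k x' y' \<le> 1" for k x' y'
      using F(2)[of k y'] norm_le_2_N[OF G that(1), of x'] that(2) unfolding ys_def by simp
    ultimately have "(0, ys, \<alpha>) \<in> Lambda_set Y N"
      using \<open>s > 0\<close> unfolding \<alpha>_def by (intro Lambda_setI[OF G]) auto
    moreover have "(\<Sum>k. \<alpha> k * ys k (y k)) = s / 2"
    proof -
      have "(\<Sum>k. \<alpha> k * ys k (y k)) = (\<Sum>k. (norm (y k))\<^sup>2) / (2 * s)"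
        unfolding \<alpha>_def ys_def F(3) using suminf_divide[OF summable, of "2 * s"]
        by (simp add: power2_eq_square mult.commute)
      also have "\<dots> = s / 2"
        using \<open>s > 0\<close> suminf_nonneg[OF summable] unfolding s_def by (simp add: field_simps)
      finally show ?thesis .
    qed
    ultimately show ?thesis
      using Lambda_apply_le_sigma_norm[OF G _ xy] \<open>s > 0\<close> unfolding s_def by fastforce
  qed
qed

lemma sigma_norm_equiv_l2_norm:
  assumes G: "gen_l2_setting Y N" and xy: "(x, y) \<in> Sigma_sp Y"
  shows "1/4 * sqrt ((norm x)\<^sup>2 + (\<Sum>k. (norm (y k))\<^sup>2)) \<le> sigma_norm Y N x y"
    and "sigma_norm Y N x y \<le> 2 * sqrt ((norm x)\<^sup>2 + (\<Sum>k. (norm (y k))\<^sup>2))"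
proof -
  define s where "s = sqrt (\<Sum>k. (norm (y k))\<^sup>2)"
  have "0 \<le> s" and s2: "(\<Sum>k. (norm (y k))\<^sup>2) = s\<^sup>2"
    unfolding s_def using suminf_nonneg[OF Sigma_spD(2)[OF xy]] by simp_all
  have "sqrt ((norm x)\<^sup>2 + s\<^sup>2) \<le> norm x + s"
    using \<open>0 \<le> s\<close> by (simp add: sqrt_sum_squares_le_sum)
  also have "\<dots> \<le> 4 * sigma_norm Y N x y"
    using norm_le_sigma_norm[OF G xy] half_sqrt_suminf_le_sigma_norm[OF G xy] norm_ge_zero[of x]
    unfolding s_def by linarith
  finally show "1/4 * sqrt ((norm x)\<^sup>2 + (\<Sum>k. (norm (y k))\<^sup>2)) \<le> sigma_norm Y N x y"
    unfolding s2 by simp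
  have "sigma_norm Y N x y \<le> norm x + s" using sigma_norm_le[OF G xy] unfolding s_def .
  also have "\<dots> \<le> 2 * sqrt ((norm x)\<^sup>2 + s\<^sup>2)"
    using real_sqrt_sum_squares_ge1[of "norm x" s] real_sqrt_sum_squares_ge2[of s "norm x"] by linarith
  finally show "sigma_norm Y N x y \<le> 2 * sqrt ((norm x)\<^sup>2 + (\<Sum>k. (norm (y k))\<^sup>2))"
    unfolding s2 .
qed

lemma Sigma_apply_abs_le:
  assumes G: "gen_l2_setting Y N" and dual: "\<And>k. ys k \<in> dual_on (Y k)"
    and summable: "summable (\<lambda>k. (dnorm_on (Y k) (ys k))\<^sup>2)"
    and xy: "(x, y) \<in> Sigma_sp Y" and unit: "sigma_norm Y N x y \<le> 1"
  shows "\<bar>blinfun_apply xs x + (\<Sum>k. ys k (y k))\<bar> \<le> norm xs + 2 * sqrt (\<Sum>k. (dnorm_on (Y k) (ys k))\<^sup>2)"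
proof -
  note S = gen_l2_settingD(1)[OF G]
  have "\<bar>\<Sum>k. ys k (y k)\<bar> \<le> sqrt (\<Sum>k. (dnorm_on (Y k) (ys k))\<^sup>2) * sqrt (\<Sum>k. (norm (y k))\<^sup>2)"
    using Cauchy_Schwarz_suminf(2) dnorm_on_nonneg[OF dual S] summable Sigma_spD(2)[OF xy]
      abs_le_dnorm_on[OF dual S Sigma_spD(1)[OF xy]] by simp
  also have "\<dots> \<le> sqrt (\<Sum>k. (dnorm_on (Y k) (ys k))\<^sup>2) * 2"
    using half_sqrt_suminf_le_sigma_norm[OF G xy] unit suminf_nonneg[OF summable]
    by (intro mult_left_mono) auto
  finally have "\<bar>\<Sum>k. ys k (y k)\<bar> \<le> 2 * sqrt (\<Sum>k. (dnorm_on (Y k) (ys k))\<^sup>2)" by simp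
  moreover have "\<bar>blinfun_apply xs x\<bar> \<le> norm xs"
  proof -
    have "\<bar>blinfun_apply xs x\<bar> \<le> norm xs * norm x" using norm_blinfun[of xs x] by simp
    also have "\<dots> \<le> norm xs * 1"
      using norm_le_sigma_norm[OF G xy] unit by (intro mult_left_mono) auto
    finally show ?thesis by simp
  qed
  ultimately show ?thesis by linarith
qed

lemma sigma_dual_norm_le:
  assumes G: "gen_l2_setting Y N" and dual: "\<And>k. ys k \<in> dual_on (Y k)"
    and summable: "summable (\<lambda>k. (dnorm_on (Y k) (ys k))\<^sup>2)"
  shows "sigma_dual_norm Y N xs ys \<le> norm xs + 2 * sqrt (\<Sum>k. (dnorm_on (Y k) (ys k))\<^sup>2)"
proof -
  have zero: "(0, \<lambda>k. 0) \<in> Sigma_sp Y"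
    unfolding Sigma_sp_def using subspace_0[OF gen_l2_settingD(1)[OF G]] by auto
  moreover have "sigma_norm Y N 0 (\<lambda>k. 0) \<le> 1" using sigma_norm_le[OF G zero] by simp
  ultimately show ?thesis
    unfolding sigma_dual_norm_def using Sigma_apply_abs_le[OF G dual summable]
    by (intro cSup_least) blast+
qed

lemma Sigma_apply_le_sigma_dual_norm:
  assumes G: "gen_l2_setting Y N" and dual: "\<And>k. ys k \<in> dual_on (Y k)"
    and summable: "summable (\<lambda>k. (dnorm_on (Y k) (ys k))\<^sup>2)"
    and xy: "(x, y) \<in> Sigma_sp Y" and unit: "sigma_norm Y N x y \<le> 1"
  shows "\<bar>blinfun_apply xs x + (\<Sum>k. ys k (y k))\<bar> \<le> sigma_dual_norm Y N xs ys"
  unfolding sigma_dual_norm_def using xy unit Sigma_apply_abs_le[OF G dual summable]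
  by (intro cSup_upper bdd_aboveI[of _ "norm xs + 2 * sqrt (\<Sum>k. (dnorm_on (Y k) (ys k))\<^sup>2)"])
    blast+

lemma norm_le_sigma_dual_norm:
  assumes G: "gen_l2_setting Y N" and dual: "\<And>k. ys k \<in> dual_on (Y k)"
    and summable: "summable (\<lambda>k. (dnorm_on (Y k) (ys k))\<^sup>2)"
  shows "norm xs \<le> sigma_dual_norm Y N xs ys"
proof -
  note S = gen_l2_settingD(1)[OF G]
  have on_X: "(x, \<lambda>k. 0) \<in> Sigma_sp Y" for x
    unfolding Sigma_sp_def using subspace_0[OF S] by auto
  have unit_ball: "\<bar>blinfun_apply xs x\<bar> \<le> sigma_dual_norm Y N xs ys" if "norm x \<le> 1" for x
    using Sigma_apply_le_sigma_dual_norm[OF G dual summable on_X] sigma_norm_le[OF G on_X, of x]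
      that dual_on_zero[OF dual S] by simp
  show ?thesis
  proof (rule norm_blinfun_bound)
    show "0 \<le> sigma_dual_norm Y N xs ys" using unit_ball[of 0] by simp
    show "norm (blinfun_apply xs x) \<le> sigma_dual_norm Y N xs ys * norm x" for x
      using abs_le_mult_norm_from_unit_ball[OF subspace_UNIV, of "blinfun_apply xs"] unit_ball
      by (simp add: blinfun.scaleR_right)
  qed
qed

lemma almost_norming_finitely_supported:
  assumes G: "gen_l2_setting Y N" and dual: "\<And>k. ys k \<in> dual_on (Y k)" and "t < 1"
  obtains y where "(0, y) \<in> Sigma_sp Y" "(\<Sum>k. (norm (y k))\<^sup>2) \<le> 1"
    "t * sqrt (\<Sum>k<n. (dnorm_on (Y k) (ys k))\<^sup>2) \<le> (\<Sum>k. ys k (y k))"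
proof -
  note S = gen_l2_settingD(1)[OF G]
  define d where "d k = dnorm_on (Y k) (ys k)" for k
  define D where "D = sqrt (\<Sum>k<n. (d k)\<^sup>2)"
  have "\<forall>k. \<exists>a. a \<in> Y k \<and> norm a \<le> 1 \<and> t * d k \<le> ys k a"
    using dnorm_on_approx[OF dual S \<open>t < 1\<close>] unfolding d_def by metis
  then obtain A where A: "\<And>k. A k \<in> Y k" "\<And>k. norm (A k) \<le> 1" "\<And>k. t * d k \<le> ys k (A k)"
    by metis
  \<comment> \<open>if \<open>D = 0\<close> then \<open>d k / D = 0\<close> and \<open>y = 0\<close>, which still does the job\<close>
  define y where "y k = (if k < n then (d k / D) *\<^sub>R A k else 0)" for k
  have D2: "D\<^sup>2 = (\<Sum>k<n. (d k)\<^sup>2)" unfolding D_def by (simp add: sum_nonneg)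
  have finite_support: "k \<notin> {..<n} \<Longrightarrow> y k = 0" for k unfolding y_def by simp
  have "summable (\<lambda>k. (norm (y k))\<^sup>2)"
    using finite_support by (intro summable_finite[of "{..<n}"]) auto
  then have xy: "(0, y) \<in> Sigma_sp Y"
    unfolding Sigma_sp_def y_def using subspace_scale[OF S A(1)] subspace_0[OF S] by auto
  have "(\<Sum>k. (norm (y k))\<^sup>2) = (\<Sum>k<n. (norm (y k))\<^sup>2)"
    using finite_support by (intro suminf_finite) auto
  also have "\<dots> \<le> (\<Sum>k<n. (d k)\<^sup>2 / D\<^sup>2)"
  proof (rule sum_mono)
    fix k assume "k \<in> {..<n}"
    have "(d k)\<^sup>2 * (norm (A k))\<^sup>2 \<le> (d k)\<^sup>2"
      using A(2)[of k] by (simp add: mult_left_le power_le_one)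
    then show "(norm (y k))\<^sup>2 \<le> (d k)\<^sup>2 / D\<^sup>2"
      using \<open>k \<in> {..<n}\<close> unfolding y_def
      by (simp add: power_mult_distrib power_divide divide_right_mono)
  qed
  also have "\<dots> \<le> 1" unfolding D2 sum_divide_distrib[symmetric] by (simp add: divide_le_eq_1)
  finally have l2: "(\<Sum>k. (norm (y k))\<^sup>2) \<le> 1" .
  have "t * D = t / D * (\<Sum>k<n. (d k)\<^sup>2)"
    unfolding D2[symmetric] by (cases "D = 0") (simp_all add: power2_eq_square)
  also have "\<dots> = (\<Sum>k<n. (d k / D) * (t * d k))"
    by (simp add: sum_distrib_left power2_eq_square algebra_simps)
  also have "\<dots> \<le> (\<Sum>k<n. (d k / D) * ys k (A k))"
    using A(3) dnorm_on_nonneg[OF dual S] unfolding d_def D_def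
    by (intro sum_mono mult_left_mono divide_nonneg_nonneg) (simp_all add: sum_nonneg)
  also have "\<dots> = (\<Sum>k. ys k (y k))"
    using finite_support dual_on_zero[OF dual S]
    by (subst suminf_finite[of "{..<n}"]) (auto simp: y_def dual_on_scaleR[OF dual A(1)])
  finally show ?thesis using that[OF xy l2] unfolding D_def d_def by blast
qed

lemma partial_dnorm_le_sigma_dual_norm:
  fixes N :: "nat \<Rightarrow> 'x::banach \<Rightarrow> 'y::banach \<Rightarrow> real"
  assumes G: "gen_l2_setting Y N" and dual: "\<And>k. ys k \<in> dual_on (Y k)"
    and summable: "summable (\<lambda>k. (dnorm_on (Y k) (ys k))\<^sup>2)"
  shows "sqrt (\<Sum>k<n. (dnorm_on (Y k) (ys k))\<^sup>2) \<le> sigma_dual_norm Y N xs ys"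
proof (rule field_le_mult_one_interval)
  fix t :: real assume "0 < t" "t < 1"
  obtain y where xy: "(0 :: 'x, y) \<in> Sigma_sp Y" and "(\<Sum>k. (norm (y k))\<^sup>2) \<le> 1"
    and norming: "t * sqrt (\<Sum>k<n. (dnorm_on (Y k) (ys k))\<^sup>2) \<le> (\<Sum>k. ys k (y k))"
    by (rule almost_norming_finitely_supported[OF G dual \<open>t < 1\<close>])
  then have "sqrt (\<Sum>k. (norm (y k))\<^sup>2) \<le> 1" by simp
  moreover have "sigma_norm Y N 0 y \<le> sqrt (\<Sum>k. (norm (y k))\<^sup>2)"
    using sigma_norm_le[OF G xy] by simp
  ultimately have "sigma_norm Y N 0 y \<le> 1" by linarith
  then have "(\<Sum>k. ys k (y k)) \<le> sigma_dual_norm Y N xs ys"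
    using abs_le_D1[OF Sigma_apply_le_sigma_dual_norm[OF G dual summable xy, of xs]] by simp
  with norming show "t * sqrt (\<Sum>k<n. (dnorm_on (Y k) (ys k))\<^sup>2) \<le> sigma_dual_norm Y N xs ys"
    by linarith
qed

lemma sqrt_suminf_dnorm_le_sigma_dual_norm:
  assumes G: "gen_l2_setting Y N" and dual: "\<And>k. ys k \<in> dual_on (Y k)"
    and summable: "summable (\<lambda>k. (dnorm_on (Y k) (ys k))\<^sup>2)"
  shows "sqrt (\<Sum>k. (dnorm_on (Y k) (ys k))\<^sup>2) \<le> sigma_dual_norm Y N xs ys"
proof -
  have "(\<Sum>k<n. (dnorm_on (Y k) (ys k))\<^sup>2) \<le> (sigma_dual_norm Y N xs ys)\<^sup>2" for n
    using power_mono[OF partial_dnorm_le_sigma_dual_norm[OF G dual summable, of n xs], of 2]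
    by (simp add: sum_nonneg)
  then have "sqrt (\<Sum>k. (dnorm_on (Y k) (ys k))\<^sup>2) \<le> sqrt ((sigma_dual_norm Y N xs ys)\<^sup>2)"
    by (intro real_sqrt_le_mono suminf_le_const[OF summable])
  then show ?thesis
    using norm_le_sigma_dual_norm[OF G dual summable, of xs] norm_ge_zero[of xs] by simp
qed

theorem lemma2p2:
  fixes Y :: "nat \<Rightarrow> 'y::banach set" and N :: "nat \<Rightarrow> 'x::banach \<Rightarrow> 'y \<Rightarrow> real"
  assumes "gen_l2_setting Y N"
  shows "(\<forall>x y. (x, y) \<in> Sigma_sp Y \<longrightarrow>
            max (norm x) (1/2 * sqrt (\<Sum>k. (norm (y k))\<^sup>2)) \<le> sigma_norm Y N x y \<and>
            sigma_norm Y N x y \<le> norm x + sqrt (\<Sum>k. (norm (y k))\<^sup>2))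
       \<and> (\<exists>c>0. \<exists>C>0. \<forall>x y. (x, y) \<in> Sigma_sp Y \<longrightarrow>
            c * sqrt ((norm x)\<^sup>2 + (\<Sum>k. (norm (y k))\<^sup>2)) \<le> sigma_norm Y N x y \<and>
            sigma_norm Y N x y \<le> C * sqrt ((norm x)\<^sup>2 + (\<Sum>k. (norm (y k))\<^sup>2)))
       \<and> (\<forall>xs ys. (\<forall>k. ys k \<in> dual_on (Y k)) \<and> summable (\<lambda>k. (dnorm_on (Y k) (ys k))\<^sup>2) \<longrightarrow>
            max (norm xs) (sqrt (\<Sum>k. (dnorm_on (Y k) (ys k))\<^sup>2)) \<le> sigma_dual_norm Y N xs ys \<and>
            sigma_dual_norm Y N xs ys \<le> norm xs + 2 * sqrt (\<Sum>k. (dnorm_on (Y k) (ys k))\<^sup>2))"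
proof (intro conjI allI impI)
  note G = assms
  show "max (norm x) (1/2 * sqrt (\<Sum>k. (norm (y k))\<^sup>2)) \<le> sigma_norm Y N x y"
    and "sigma_norm Y N x y \<le> norm x + sqrt (\<Sum>k. (norm (y k))\<^sup>2)"
    if "(x, y) \<in> Sigma_sp Y" for x y
    using norm_le_sigma_norm[OF G that] half_sqrt_suminf_le_sigma_norm[OF G that]
      sigma_norm_le[OF G that] by simp_all
  show "\<exists>c>0. \<exists>C>0. \<forall>x y. (x, y) \<in> Sigma_sp Y \<longrightarrow>
      c * sqrt ((norm x)\<^sup>2 + (\<Sum>k. (norm (y k))\<^sup>2)) \<le> sigma_norm Y N x y \<and>
      sigma_norm Y N x y \<le> C * sqrt ((norm x)\<^sup>2 + (\<Sum>k. (norm (y k))\<^sup>2))"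
    using sigma_norm_equiv_l2_norm[OF G] by (intro exI[of _ "1/4::real"] conjI exI[of _ "2::real"] allI impI) auto
  show "max (norm xs) (sqrt (\<Sum>k. (dnorm_on (Y k) (ys k))\<^sup>2)) \<le> sigma_dual_norm Y N xs ys"
    and "sigma_dual_norm Y N xs ys \<le> norm xs + 2 * sqrt (\<Sum>k. (dnorm_on (Y k) (ys k))\<^sup>2)"
    if "(\<forall>k. ys k \<in> dual_on (Y k)) \<and> summable (\<lambda>k. (dnorm_on (Y k) (ys k))\<^sup>2)" for xs ys
    using that norm_le_sigma_dual_norm[OF G] sqrt_suminf_dnorm_le_sigma_dual_norm[OF G]
      sigma_dual_norm_le[OF G] by simp_all
qed

end
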